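(* Let $\mathcal{J}$ be an adapted almost tangent structure on $T^{*}M$, $\rho$ a $\mathcal{J}$-regular vector field, $\mathcal{N}$ an arbitrary nonlinear connection with projectors $h,v$, and $\nabla$ the dynamical covariant derivative with respect to $\rho$ and $\mathcal{N}$. The following conditions are equivalent: (i) $\nabla\mathcal{J}=0$; (ii) $\mathcal{L}_\rho\mathcal{J}+h-v=0$; (iii) $\mathcal{N}_{ij}=\frac12\Big(t_{ik}\frac{\partial\chi_j}{\partial p_k}-t_{kj}\frac{\partial\xi^k}{\partial x^i}-\rho(t_{ij})\Big)$.
   Context: $M$ is a smooth $n$-manifold, $T^*M$ its cotangent bundle with local coordinates $(x^i,p_i)$; summation over repeated indices. $VT^*M$ is the vertical distribution spanned by $\frac{\partial}{\partial p_i}$. A nonlinear connection $\mathcal{N}$ is a distribution $HT^*M$ supplementary to $VT^*M$; locally it has adapted basis $\frac{\delta}{\delta x^i}=\frac{\partial}{\partial x^i}+\mathcal{N}_{ij}\frac{\partial}{\partial p_j}$ with dual forms $dx^i$, $\delta p_i=dp_i-\mathcal{N}_{ij}dx^j$; its projectors are $h=\frac{\delta}{\delta x^i}\otimes dx^i$, $v=\frac{\partial}{\partial p_i}\otimes\delta p_i$. An adapted almost tangent structure is a $(1,1)$-tensor field $\mathcal{J}$ of rank $n$ with $\mathcal{J}^2=0$ and $\operatorname{Im}\mathcal{J}=\operatorname{Ker}\mathcal{J}=VT^*M$; locally $\mathcal{J}=t_{ij}dx^i\otimes\frac{\partial}{\partial p_j}$. A vector field $\rho=\xi^i(x,p)\frac{\partial}{\partial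 x^i}+\chi_i(x,p)\frac{\partial}{\partial p_i}$ is $\mathcal{J}$-regular if $\mathcal{J}[\rho,\mathcal{J}X]=-\mathcal{J}X$ for all vector fields $X$. $\mathcal{L}_\rho\mathcal{J}$ is the $(1,1)$-tensor $X\mapsto[\rho,\mathcal{J}X]-\mathcal{J}[\rho,X]$. The dynamical covariant derivative with respect to $\rho$ and $\mathcal{N}$ is the tensor derivation $\nabla$ on $T^*M\setminus\{0\}$ ($\mathbb{R}$-linear, type preserving, Leibniz rule, commuting with contractions) determined by $\nabla f=\rho(f)$ on functions and $\nabla X=h[\rho,hX]+v[\rho,vX]$ on vector fields; on a $(1,1)$-tensor $T$, $\nabla T=\nabla\circ T-T\circ\nabla$. *)

theory Defs
  imports "HOL-Analysis.Analysis"
begin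

text \<open>Local-coordinate model of the cotangent bundle over a chart:
  points (x,p) of T*M are pairs of vectors in R^n, index type 'n.
  Vector fields are maps 'n cot => 'n cot (components in the coordinate
  frame d/dx^i, d/dp_i); (1,1)-tensor fields are fields of linear maps.\<close>

type_synonym 'n cot = "(real^'n) \<times> (real^'n)"

fun Ck_on :: "nat \<Rightarrow> ('a::euclidean_space) set \<Rightarrow> ('a \<Rightarrow> 'b::real_normed_vector) \<Rightarrow> bool" where
  "Ck_on 0 W f = continuous_on W f"
| "Ck_on (Suc k) W f =
     ((\<forall>z\<in>W. f differentiable (at z)) \<and>
      (\<forall>b\<in>Basis. Ck_on k W (\<lambda>z. frechet_derivative f (at z) b)))"

definition smooth_on :: "('a::euclidean_space) set \<Rightarrow> ('a \<Rightarrow> 'b::real_normed_vector) \<Rightarrow> bool" where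
  "smooth_on W f \<longleftrightarrow> (\<forall>k. Ck_on k W f)"

definition vert :: "('n::finite) cot set" where
  "vert = {w. fst w = 0}"

definition lie :: "('n::finite cot \<Rightarrow> 'n cot) \<Rightarrow> ('n cot \<Rightarrow> 'n cot) \<Rightarrow> 'n cot \<Rightarrow> 'n cot" where
  "lie X Y z = frechet_derivative Y (at z) (X z) - frechet_derivative X (at z) (Y z)"

definition adapted_ats :: "('n::finite) cot set \<Rightarrow> ('n cot \<Rightarrow> 'n cot \<Rightarrow> 'n cot) \<Rightarrow> bool" where
  "adapted_ats W J \<longleftrightarrow>
     (\<forall>z\<in>W. linear (J z) \<and> J z \<circ> J z = (\<lambda>_. 0) \<and> range (J z) = vert \<and> {w. J z w = 0} = vert)
     \<and> (\<forall>w. smooth_on W (\<lambda>z. J z w))"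

text \<open>Components t_ij of J = t_ij dx^i (x) d/dp_j.\<close>
definition tcoef :: "('n::finite cot \<Rightarrow> 'n cot \<Rightarrow> 'n cot) \<Rightarrow> 'n cot \<Rightarrow> 'n \<Rightarrow> 'n \<Rightarrow> real" where
  "tcoef J z i j = snd (J z (axis i 1, 0)) $ j"

definition J_regular :: "('n::finite) cot set \<Rightarrow> ('n cot \<Rightarrow> 'n cot \<Rightarrow> 'n cot) \<Rightarrow> ('n cot \<Rightarrow> 'n cot) \<Rightarrow> bool" where
  "J_regular W J \<rho> \<longleftrightarrow> smooth_on W \<rho> \<and>
     (\<forall>X. smooth_on W X \<longrightarrow> (\<forall>z\<in>W. J z (lie \<rho> (\<lambda>y. J y (X y)) z) = - J z (X z)))"

text \<open>Nonlinear connection given by smooth coefficients N_ij: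
  delta/delta x^i = d/dx^i + N_ij d/dp_j.\<close>
definition nonlinear_connection :: "('n::finite) cot set \<Rightarrow> ('n cot \<Rightarrow> 'n \<Rightarrow> 'n \<Rightarrow> real) \<Rightarrow> bool" where
  "nonlinear_connection W N \<longleftrightarrow> (\<forall>i j. smooth_on W (\<lambda>z. N z i j))"

text \<open>Horizontal projector h = delta/delta x^i (x) dx^i and vertical projector v = id - h.\<close>
definition hproj :: "('n::finite cot \<Rightarrow> 'n \<Rightarrow> 'n \<Rightarrow> real) \<Rightarrow> 'n cot \<Rightarrow> 'n cot \<Rightarrow> 'n cot" where
  "hproj N z w = (fst w, \<chi> j. \<Sum>i\<in>UNIV. fst w $ i * N z i j)"

definition vproj :: "('n::finite cot \<Rightarrow> 'n \<Rightarrow> 'n \<Rightarrow> real) \<Rightarrow> 'n cot \<Rightarrow> 'n cot \<Rightarrow> 'n cot" where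
  "vproj N z w = w - hproj N z w"

definition dyn_nabla :: "('n::finite cot \<Rightarrow> 'n cot) \<Rightarrow> ('n cot \<Rightarrow> 'n \<Rightarrow> 'n \<Rightarrow> real) \<Rightarrow> ('n cot \<Rightarrow> 'n cot) \<Rightarrow> 'n cot \<Rightarrow> 'n cot" where
  "dyn_nabla \<rho> N X z =
     hproj N z (lie \<rho> (\<lambda>y. hproj N y (X y)) z) + vproj N z (lie \<rho> (\<lambda>y. vproj N y (X y)) z)"

definition dyn_nabla_T :: "('n::finite cot \<Rightarrow> 'n cot) \<Rightarrow> ('n cot \<Rightarrow> 'n \<Rightarrow> 'n \<Rightarrow> real) \<Rightarrow> ('n cot \<Rightarrow> 'n cot \<Rightarrow> 'n cot) \<Rightarrow> ('n cot \<Rightarrow> 'n cot) \<Rightarrow> 'n cot \<Rightarrow> 'n cot" where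
  "dyn_nabla_T \<rho> N T X z = dyn_nabla \<rho> N (\<lambda>y. T y (X y)) z - T z (dyn_nabla \<rho> N X z)"

definition lie_deriv_T :: "('n::finite cot \<Rightarrow> 'n cot) \<Rightarrow> ('n cot \<Rightarrow> 'n cot \<Rightarrow> 'n cot) \<Rightarrow> ('n cot \<Rightarrow> 'n cot) \<Rightarrow> 'n cot \<Rightarrow> 'n cot" where
  "lie_deriv_T \<rho> T X z = lie \<rho> (\<lambda>y. T y (X y)) z - T z (lie \<rho> X z)"

end

theory Submission
  imports Defs
begin

text \<open>Both \<open>\<nabla>J\<close> and \<open>\<L>\<^sub>\<rho>J + h - v\<close> are tensorial, and they coincide.
  Since \<open>JX\<close> is vertical, \<open>\<nabla>(JX) = v[\<rho>, JX]\<close>, while \<open>J(\<nabla>X) = J[\<rho>, hX]\<close>.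
  Testing \<open>J\<close>-regularity on constant fields shows that \<open>J\<close> inverts \<open>D\<rho>\<close> on vertical
  vectors; hence \<open>J[\<rho>, Y] = -Y\<close> for vertical \<open>Y\<close> and \<open>h \<circ> \<L>\<^sub>\<rho>J = -h\<close>, and
  these two facts turn \<open>\<nabla>J\<close> into \<open>\<L>\<^sub>\<rho>J + h - v\<close>. The latter tensor kills
  vertical vectors and has vertical values, so it vanishes iff its \<open>dx\<^sup>i \<otimes> \<partial>/\<partial>p\<^sub>j\<close>
  components \<open>\<rho>(t\<^sub>i\<^sub>j) - t\<^sub>i\<^sub>k \<partial>\<chi>\<^sub>j/\<partial>p\<^sub>k + t\<^sub>k\<^sub>j \<partial>\<xi>\<^sup>k/\<partial>x\<^sup>i + 2\<N>\<^sub>i\<^sub>j\<close> vanish.\<close>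

lemma linear_euclidean_expansion:
  fixes L :: "'a::euclidean_space \<Rightarrow> 'b::real_vector"
  assumes "linear L"
  shows "L w = (\<Sum>b\<in>Basis. (w \<bullet> b) *\<^sub>R L b)"
proof -
  have "L w = L (\<Sum>b\<in>Basis. (w \<bullet> b) *\<^sub>R b)" by (simp add: euclidean_representation)
  also have "\<dots> = (\<Sum>b\<in>Basis. (w \<bullet> b) *\<^sub>R L b)"
    by (simp add: linear_sum[OF assms] linear_scale[OF assms])
  finally show ?thesis .
qed

lemma vec_axis_expansion: "(x::real^'n) = (\<Sum>i\<in>UNIV. x $ i *\<^sub>R axis i 1)"
  using basis_expansion[of x] by (simp add: scalar_mult_eq_scaleR)

lemma sum_axis_left: "(\<Sum>l\<in>UNIV. axis i (1::real) $ l * f l) = f i"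
  by (simp add: axis_def if_distrib[of "\<lambda>x. x * _"] cong: if_cong)

lemma Ck_on_const: "Ck_on k W (\<lambda>_. c)"
  by (induction k arbitrary: c) simp_all

lemma smooth_on_const: "smooth_on W (\<lambda>_. c)"
  unfolding smooth_on_def using Ck_on_const by blast

lemma smooth_on_differentiable: "smooth_on W f \<Longrightarrow> z \<in> W \<Longrightarrow> f differentiable (at z)"
  unfolding smooth_on_def by (metis Ck_on.simps(2))

lemma frechet_derivative_bounded_linear_compose:
  assumes "(f has_derivative f') (at z)" "bounded_linear g"
  shows "frechet_derivative (\<lambda>y. g (f y)) (at z) v = g (f' v)"
  by (metis frechet_derivative_at bounded_linear.has_derivative assms)

lemma has_derivative_const_within_open:
  assumes "(f has_derivative f') (at z)" "open W" "z \<in> W" "\<And>y. y \<in> W \<Longrightarrow> f y = c"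
  shows "f' = (\<lambda>_. 0)"
proof -
  have "((\<lambda>_. c) has_derivative f') (at z)"
    using assms(4) by (intro has_derivative_transform_within_open[OF assms(1-3)]) auto
  then show ?thesis using has_derivative_unique[OF _ has_derivative_const] by metis
qed

definition tensor_deriv :: "('a::real_normed_vector \<Rightarrow> 'b \<Rightarrow> 'c::real_normed_vector) \<Rightarrow> 'a \<Rightarrow> 'a \<Rightarrow> 'b \<Rightarrow> 'c" where
  "tensor_deriv T z v w = frechet_derivative (\<lambda>y. T y w) (at z) v"

lemma has_derivative_tensor_apply_basis:
  fixes T :: "'a::real_normed_vector \<Rightarrow> 'b::euclidean_space \<Rightarrow> 'c::real_normed_vector"
  assumes "open W" "z \<in> W" "\<And>y. y \<in> W \<Longrightarrow> linear (T y)"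
    and "\<And>b. b \<in> Basis \<Longrightarrow> (\<lambda>y. T y b) differentiable (at z)"
    and "(X has_derivative B) (at z)"
  shows "((\<lambda>y. T y (X y)) has_derivative
           (\<lambda>v. T z (B v) + (\<Sum>b\<in>Basis. (X z \<bullet> b) *\<^sub>R tensor_deriv T z v b))) (at z)"
proof -
  have "((\<lambda>y. \<Sum>b\<in>Basis. (X y \<bullet> b) *\<^sub>R T y b) has_derivative
          (\<lambda>v. \<Sum>b\<in>Basis. (X z \<bullet> b) *\<^sub>R tensor_deriv T z v b + (B v \<bullet> b) *\<^sub>R T z b)) (at z)"
    unfolding tensor_deriv_def
    by (intro has_derivative_sum has_derivative_scaleR has_derivative_inner_left assms(5)
        iffD1[OF frechet_derivative_works] assms(4))
  then have "((\<lambda>y. T y (X y)) has_derivative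
          (\<lambda>v. \<Sum>b\<in>Basis. (X z \<bullet> b) *\<^sub>R tensor_deriv T z v b + (B v \<bullet> b) *\<^sub>R T z b)) (at z)"
    by (rule has_derivative_transform_within_open[OF _ assms(1,2)])
       (simp add: assms(3) linear_euclidean_expansion[symmetric])
  then show ?thesis
    by (simp add: sum.distrib linear_euclidean_expansion[OF assms(3)[OF assms(2)], of "B _"]
        add.commute)
qed

lemma tensor_deriv_expansion:
  fixes T :: "'a::real_normed_vector \<Rightarrow> 'b::euclidean_space \<Rightarrow> 'c::real_normed_vector"
  assumes "open W" "z \<in> W" "\<And>y. y \<in> W \<Longrightarrow> linear (T y)"
    and "\<And>b. b \<in> Basis \<Longrightarrow> (\<lambda>y. T y b) differentiable (at z)"
  shows "tensor_deriv T z v w = (\<Sum>b\<in>Basis. (w \<bullet> b) *\<^sub>R tensor_deriv T z v b)"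
proof -
  have "((\<lambda>y. T y w) has_derivative (\<lambda>v. \<Sum>b\<in>Basis. (w \<bullet> b) *\<^sub>R tensor_deriv T z v b)) (at z)"
    using has_derivative_tensor_apply_basis[OF assms has_derivative_const, of w]
    by (simp add: linear_0[OF assms(3)[OF assms(2)]])
  from frechet_derivative_at[OF this, symmetric] show ?thesis
    by (simp add: tensor_deriv_def[of T z v w])
qed

lemma has_derivative_tensor_apply:
  fixes T :: "'a::real_normed_vector \<Rightarrow> 'b::euclidean_space \<Rightarrow> 'c::real_normed_vector"
  assumes "open W" "z \<in> W" "\<And>y. y \<in> W \<Longrightarrow> linear (T y)"
    and "\<And>b. b \<in> Basis \<Longrightarrow> (\<lambda>y. T y b) differentiable (at z)"
    and "(X has_derivative B) (at z)"
  shows "((\<lambda>y. T y (X y)) has_derivative (\<lambda>v. T z (B v) + tensor_deriv T z v (X z))) (at z)"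
  using has_derivative_tensor_apply_basis[OF assms]
  by (simp only: tensor_deriv_expansion[OF assms(1-4), of _ "X z", symmetric])

lemma linear_tensor_deriv:
  fixes T :: "'a::real_normed_vector \<Rightarrow> 'b::euclidean_space \<Rightarrow> 'c::real_normed_vector"
  assumes "open W" "z \<in> W" "\<And>y. y \<in> W \<Longrightarrow> linear (T y)"
    and "\<And>b. b \<in> Basis \<Longrightarrow> (\<lambda>y. T y b) differentiable (at z)"
  shows "linear (tensor_deriv T z v)"
proof -
  have "tensor_deriv T z v = (\<lambda>w. \<Sum>b\<in>Basis. (w \<bullet> b) *\<^sub>R tensor_deriv T z v b)"
    by (rule ext) (rule tensor_deriv_expansion[OF assms])
  moreover have "linear (\<lambda>w. \<Sum>b\<in>Basis. (w \<bullet> b) *\<^sub>R tensor_deriv T z v b)"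
    by (rule linearI) (simp_all add: inner_add_left scaleR_add_left sum.distrib scaleR_sum_right)
  ultimately show ?thesis by simp
qed

lemma fst_hproj [simp]: "fst (hproj N z w) = fst w"
  by (simp add: hproj_def)

lemma fst_vproj [simp]: "fst (vproj N z w) = 0"
  by (simp add: vproj_def)

lemma hproj_cong: "fst w = fst w' \<Longrightarrow> hproj N z w = hproj N z w'"
  by (simp add: hproj_def)

lemma hproj_vertical: "fst w = 0 \<Longrightarrow> hproj N z w = 0"
  by (simp add: hproj_def zero_prod_def vec_eq_iff)

lemma vproj_vertical: "fst w = 0 \<Longrightarrow> vproj N z w = w"
  by (simp add: vproj_def hproj_vertical)

lemma snd_hproj_axis: "snd (hproj N z (axis i 1, 0)) $ j = N z i j"
  by (simp add: hproj_def sum_axis_left)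

lemma linear_hproj: "linear (hproj N z)"
  by (rule linearI) (auto simp: hproj_def vec_eq_iff sum.distrib algebra_simps sum_distrib_left)

lemma linear_vproj: "linear (vproj N z)"
  unfolding vproj_def by (intro linear_compose_sub linear_ident linear_hproj)

lemma hproj_expansion:
  "hproj N y w = (fst w, 0) + (\<Sum>j\<in>UNIV. (\<Sum>i\<in>UNIV. fst w $ i * N y i j) *\<^sub>R (0, axis j 1))"
proof -
  let ?c = "\<lambda>j. \<Sum>i\<in>UNIV. fst w $ i * N y i j"
  have "(\<Sum>j\<in>UNIV. ?c j *\<^sub>R axis j 1) = (\<chi> j. ?c j)"
    using vec_axis_expansion[of "\<chi> j. ?c j"] by simp
  then show ?thesis
    by (simp add: hproj_def prod_eq_iff fst_sum snd_sum)
qed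

lemma bounded_linear_fst_nth: "bounded_linear (\<lambda>q. fst q $ j)"
  by (rule bounded_linear_compose[OF bounded_linear_vec_nth bounded_linear_fst])

lemma bounded_linear_snd_nth: "bounded_linear (\<lambda>q. snd q $ j)"
  by (rule bounded_linear_compose[OF bounded_linear_vec_nth bounded_linear_snd])

lemma hproj_field_differentiable:
  assumes "\<And>i j. (\<lambda>y. N y i j) differentiable (at z)" and "X differentiable (at z)"
  shows "(\<lambda>y. hproj N y (X y)) differentiable (at z)"
proof -
  have "(\<lambda>y. fst (X y)) differentiable (at z)"
    using differentiable_compose[OF bounded_linear_imp_differentiable[OF bounded_linear_fst]
        assms(2)] by simp
  moreover have "(\<lambda>y. fst (X y) $ i) differentiable (at z)" for i
    using differentiable_compose[OF bounded_linear_imp_differentiable[OF bounded_linear_fst_nth]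
        assms(2)] by simp
  ultimately have "(\<lambda>y. (fst (X y), 0) +
      (\<Sum>j\<in>UNIV. (\<Sum>i\<in>UNIV. fst (X y) $ i * N y i j) *\<^sub>R ((0::real^'a), axis j (1::real))))
      differentiable (at z)"
    using assms by (intro derivative_intros) auto
  then show ?thesis
    by (simp only: hproj_expansion)
qed

lemma pair_zero_axis_expansion: "(x, 0) = (\<Sum>i\<in>UNIV. x $ i *\<^sub>R (axis i 1, 0))"
  by (simp add: prod_eq_iff fst_sum snd_sum vec_axis_expansion[symmetric])

lemma linear_eq_0_iff_horizontal_axes:
  fixes P :: "'n::finite cot \<Rightarrow> 'n cot"
  assumes "linear P" and "\<And>w. fst (P w) = 0" and "\<And>w. fst w = 0 \<Longrightarrow> P w = 0"
  shows "(\<forall>w. P w = 0) \<longleftrightarrow> (\<forall>i j. snd (P (axis i 1, 0)) $ j = 0)"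
proof
  assume "\<forall>i j. snd (P (axis i 1, 0)) $ j = 0"
  then have axes: "P (axis i 1, 0) = 0" for i
    using assms(2) by (simp add: prod_eq_iff vec_eq_iff)
  show "\<forall>w. P w = 0"
  proof
    fix w :: "'n cot"
    have "P (fst w, 0) = (\<Sum>i\<in>UNIV. fst w $ i *\<^sub>R P (axis i 1, 0))"
      by (subst pair_zero_axis_expansion[of "fst w"])
         (simp only: linear_sum[OF assms(1)] linear_scale[OF assms(1)])
    then have "P (fst w, 0) = 0"
      by (simp add: axes)
    moreover have "P w = P (fst w, 0) + P (0, snd w)"
      using linear_add[OF assms(1), of "(fst w, 0)" "(0, snd w)"] by simp
    ultimately show "P w = 0" using assms(3)[of "(0, snd w)"] by simp
  qed
qed simp

lemma vanishes_on_smooth_fields_iff: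
  "(\<forall>X. smooth_on W X \<longrightarrow> (\<forall>z\<in>W. F z (X z) = 0)) \<longleftrightarrow> (\<forall>z\<in>W. \<forall>w. F z w = 0)"
  using smooth_on_const[of W] by fastforce

lemma lie_add:
  assumes "Y differentiable (at z)" "Z differentiable (at z)"
    and "linear (frechet_derivative \<rho> (at z))"
  shows "lie \<rho> (\<lambda>y. Y y + Z y) z = lie \<rho> Y z + lie \<rho> Z z"
proof -
  have "((\<lambda>y. Y y + Z y) has_derivative
      (\<lambda>v. frechet_derivative Y (at z) v + frechet_derivative Z (at z) v)) (at z)"
    using assms(1,2) frechet_derivative_works by (blast intro: has_derivative_add)
  from frechet_derivative_at[OF this, symmetric] show ?thesis
    by (simp add: lie_def linear_add[OF assms(3)])
qed

text \<open>The value of \<open>\<L>\<^sub>\<rho>T\<close> at \<open>z\<close>: \<open>[\<rho>, TX] - T[\<rho>, X]\<close> depends on \<open>X\<close> only through \<open>X z\<close>.\<close>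
definition lie_deriv_at ::
    "('n::finite cot \<Rightarrow> 'n cot) \<Rightarrow> ('n cot \<Rightarrow> 'n cot \<Rightarrow> 'n cot) \<Rightarrow> 'n cot \<Rightarrow> 'n cot \<Rightarrow> 'n cot" where
  "lie_deriv_at \<rho> T z w =
     tensor_deriv T z (\<rho> z) w - frechet_derivative \<rho> (at z) (T z w) + T z (frechet_derivative \<rho> (at z) w)"

locale adapted_structure =
  fixes W :: "('n::finite) cot set" and J :: "'n cot \<Rightarrow> 'n cot \<Rightarrow> 'n cot"
  assumes open_W: "open W" and adapted: "adapted_ats W J"
begin

lemma linear_J: "y \<in> W \<Longrightarrow> linear (J y)"
  using adapted unfolding adapted_ats_def by blast

lemma fst_J [simp]: "y \<in> W \<Longrightarrow> fst (J y w) = 0"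
  using adapted unfolding adapted_ats_def vert_def by blast

lemma J_eq_0_iff: "y \<in> W \<Longrightarrow> J y w = 0 \<longleftrightarrow> fst w = 0"
  using adapted unfolding adapted_ats_def vert_def by blast

lemma J_vertical: "y \<in> W \<Longrightarrow> fst w = 0 \<Longrightarrow> J y w = 0"
  using J_eq_0_iff by blast

lemma vertical_in_range_J: "y \<in> W \<Longrightarrow> fst q = 0 \<Longrightarrow> \<exists>u. q = J y u"
  using adapted unfolding adapted_ats_def vert_def by blast

lemma J_cong: "y \<in> W \<Longrightarrow> fst w = fst w' \<Longrightarrow> J y w = J y w'"
  using J_eq_0_iff[of y "w - w'"] linear_diff[OF linear_J] by simp

lemma J_differentiable: "z \<in> W \<Longrightarrow> (\<lambda>y. J y w) differentiable (at z)"
  using adapted smooth_on_differentiable unfolding adapted_ats_def by blast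

lemma has_derivative_J_apply:
  "z \<in> W \<Longrightarrow> (X has_derivative B) (at z) \<Longrightarrow>
     ((\<lambda>y. J y (X y)) has_derivative (\<lambda>v. J z (B v) + tensor_deriv J z v (X z))) (at z)"
  by (rule has_derivative_tensor_apply[OF open_W _ linear_J J_differentiable])

lemma has_derivative_J: "z \<in> W \<Longrightarrow> ((\<lambda>y. J y w) has_derivative (\<lambda>v. tensor_deriv J z v w)) (at z)"
  using J_differentiable frechet_derivative_works unfolding tensor_deriv_def by blast

lemma linear_tensor_deriv_J: "z \<in> W \<Longrightarrow> linear (tensor_deriv J z v)"
  by (rule linear_tensor_deriv[OF open_W _ linear_J J_differentiable])

lemma fst_tensor_deriv_J [simp]: "z \<in> W \<Longrightarrow> fst (tensor_deriv J z v w) = 0"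
  using has_derivative_const_within_open[OF has_derivative_fst[OF has_derivative_J] open_W]
  by (metis fst_J)

lemma tensor_deriv_J_vertical: "z \<in> W \<Longrightarrow> fst w = 0 \<Longrightarrow> tensor_deriv J z v w = 0"
  using has_derivative_const_within_open[OF has_derivative_J open_W] J_eq_0_iff by metis

lemma J_horizontal_axis:
  "z \<in> W \<Longrightarrow> J z (axis i 1, 0) = (\<Sum>k\<in>UNIV. tcoef J z i k *\<^sub>R (0, axis k 1))"
  using vec_axis_expansion[of "snd (J z (axis i 1, 0))"]
  by (simp add: prod_eq_iff fst_sum snd_sum tcoef_def)

lemma snd_J_nth: "z \<in> W \<Longrightarrow> snd (J z q) $ j = (\<Sum>l\<in>UNIV. fst q $ l * tcoef J z l j)"
proof -
  assume z: "z \<in> W"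
  have "J z (fst q, 0) = (\<Sum>l\<in>UNIV. fst q $ l *\<^sub>R J z (axis l 1, 0))"
    by (subst pair_zero_axis_expansion[of "fst q"])
       (simp only: linear_sum[OF linear_J[OF z]] linear_scale[OF linear_J[OF z]])
  moreover have "J z q = J z (fst q, 0)" by (rule J_cong[OF z]) simp
  ultimately show ?thesis by (simp add: snd_sum tcoef_def)
qed

lemma frechet_derivative_tcoef:
  "z \<in> W \<Longrightarrow>
     frechet_derivative (\<lambda>y. tcoef J y i j) (at z) v = snd (tensor_deriv J z v (axis i 1, 0)) $ j"
  unfolding tcoef_def
  by (rule frechet_derivative_bounded_linear_compose[OF has_derivative_J bounded_linear_snd_nth])

lemma lie_deriv_T_eq:
  assumes z: "z \<in> W" and X: "X differentiable (at z)"
  shows "lie_deriv_T \<rho> J X z = lie_deriv_at \<rho> J z (X z)"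
proof -
  have "frechet_derivative (\<lambda>y. J y (X y)) (at z) =
      (\<lambda>v. J z (frechet_derivative X (at z) v) + tensor_deriv J z v (X z))"
    using frechet_derivative_at[OF has_derivative_J_apply[OF z X[unfolded frechet_derivative_works]]]
    by simp
  then show ?thesis
    by (simp add: lie_deriv_T_def lie_deriv_at_def lie_def linear_diff[OF linear_J[OF z]]
        algebra_simps)
qed

end

locale regular_field = adapted_structure +
  fixes \<rho> :: "('n::finite) cot \<Rightarrow> 'n cot"
  assumes regular: "J_regular W J \<rho>"
begin

lemma rho_differentiable: "z \<in> W \<Longrightarrow> \<rho> differentiable (at z)"
  using regular smooth_on_differentiable unfolding J_regular_def by blast

lemma linear_deriv_rho: "z \<in> W \<Longrightarrow> linear (frechet_derivative \<rho> (at z))"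
  using rho_differentiable linear_frechet_derivative by blast

lemma J_deriv_rho_J: "z \<in> W \<Longrightarrow> J z (frechet_derivative \<rho> (at z) (J z w)) = J z w"
proof -
  assume z: "z \<in> W"
  have "J z (lie \<rho> (\<lambda>y. J y w) z) = - J z w"
    using regular smooth_on_const[of W w] z unfolding J_regular_def by blast
  moreover have "frechet_derivative (\<lambda>y. J y w) (at z) = (\<lambda>v. tensor_deriv J z v w)"
    using frechet_derivative_at[OF has_derivative_J[OF z]] by simp
  moreover have "J z (tensor_deriv J z (\<rho> z) w) = 0"
    using J_eq_0_iff z by simp
  ultimately show ?thesis
    by (simp add: lie_def linear_diff[OF linear_J[OF z]])
qed

lemma fst_deriv_rho_J: "z \<in> W \<Longrightarrow> fst (frechet_derivative \<rho> (at z) (J z w)) = fst w"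
  using J_eq_0_iff[of z "frechet_derivative \<rho> (at z) (J z w) - w"] J_deriv_rho_J
    linear_diff[OF linear_J] by simp

lemma J_deriv_rho_vertical: "z \<in> W \<Longrightarrow> fst q = 0 \<Longrightarrow> J z (frechet_derivative \<rho> (at z) q) = q"
  using vertical_in_range_J J_deriv_rho_J by metis

lemma J_lie_vertical_field:
  assumes z: "z \<in> W" and Y: "Y differentiable (at z)"
    and vert: "\<And>y. y \<in> W \<Longrightarrow> fst (Y y) = 0"
  shows "J z (lie \<rho> Y z) = - Y z"
proof -
  have DY: "(Y has_derivative frechet_derivative Y (at z)) (at z)"
    using Y frechet_derivative_works by blast
  have "(\<lambda>v. fst (frechet_derivative Y (at z) v)) = (\<lambda>_. 0)"
    by (rule has_derivative_const_within_open[OF has_derivative_fst[OF DY] open_W z vert])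
  then have "J z (frechet_derivative Y (at z) (\<rho> z)) = 0"
    using J_eq_0_iff[OF z] by metis
  then show ?thesis
    using J_deriv_rho_vertical[OF z vert[OF z]]
    by (simp add: lie_def linear_diff[OF linear_J[OF z]])
qed

lemma linear_lie_deriv_at: "z \<in> W \<Longrightarrow> linear (lie_deriv_at \<rho> J z)"
  unfolding lie_deriv_at_def
  by (intro linear_compose_add linear_compose_sub linear_tensor_deriv_J
      linear_compose[OF linear_J linear_deriv_rho, unfolded o_def]
      linear_compose[OF linear_deriv_rho linear_J, unfolded o_def])

lemma fst_lie_deriv_at: "z \<in> W \<Longrightarrow> fst (lie_deriv_at \<rho> J z w) = - fst w"
  by (simp add: lie_deriv_at_def fst_deriv_rho_J)

lemma lie_deriv_at_vertical: "z \<in> W \<Longrightarrow> fst w = 0 \<Longrightarrow> lie_deriv_at \<rho> J z w = w"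
  by (simp add: lie_deriv_at_def tensor_deriv_J_vertical J_vertical J_deriv_rho_vertical
      linear_0[OF linear_deriv_rho])

lemma hproj_lie_deriv_at: "z \<in> W \<Longrightarrow> hproj N z (lie_deriv_at \<rho> J z w) = - hproj N z w"
  using hproj_cong[of "lie_deriv_at \<rho> J z w" "- w"] fst_lie_deriv_at linear_neg[OF linear_hproj]
  by simp

lemma snd_lie_deriv_at_axis:
  assumes z: "z \<in> W"
  shows "snd (lie_deriv_at \<rho> J z (axis i 1, 0)) $ j =
     frechet_derivative (\<lambda>y. tcoef J y i j) (at z) (\<rho> z)
     - (\<Sum>k\<in>UNIV. tcoef J z i k * frechet_derivative (\<lambda>y. snd (\<rho> y) $ j) (at z) (0, axis k 1))
     + (\<Sum>k\<in>UNIV. tcoef J z k j * frechet_derivative (\<lambda>y. fst (\<rho> y) $ k) (at z) (axis i 1, 0))"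
proof -
  let ?D = "frechet_derivative \<rho> (at z)"
  have D\<rho>: "(\<rho> has_derivative ?D) (at z)"
    using rho_differentiable[OF z] frechet_derivative_works by blast
  have "?D (J z (axis i 1, 0)) = (\<Sum>k\<in>UNIV. tcoef J z i k *\<^sub>R ?D (0, axis k 1))"
    unfolding J_horizontal_axis[OF z]
    by (simp only: linear_sum[OF linear_deriv_rho[OF z]] linear_scale[OF linear_deriv_rho[OF z]])
  then have D_J: "snd (?D (J z (axis i 1, 0))) $ j =
      (\<Sum>k\<in>UNIV. tcoef J z i k * frechet_derivative (\<lambda>y. snd (\<rho> y) $ j) (at z) (0, axis k 1))"
    by (simp add: snd_sum frechet_derivative_bounded_linear_compose[OF D\<rho> bounded_linear_snd_nth])
  have J_D: "snd (J z (?D (axis i 1, 0))) $ j =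
      (\<Sum>k\<in>UNIV. tcoef J z k j * frechet_derivative (\<lambda>y. fst (\<rho> y) $ k) (at z) (axis i 1, 0))"
    by (simp add: snd_J_nth[OF z] mult.commute
        frechet_derivative_bounded_linear_compose[OF D\<rho> bounded_linear_fst_nth])
  show ?thesis
    by (simp add: lie_deriv_at_def frechet_derivative_tcoef[OF z] D_J J_D)
qed

end

locale dynamical_setting = regular_field +
  fixes N :: "('n::finite) cot \<Rightarrow> 'n \<Rightarrow> 'n \<Rightarrow> real"
  assumes connection: "nonlinear_connection W N"
begin

lemma hproj_field_differentiable_at:
  "z \<in> W \<Longrightarrow> X differentiable (at z) \<Longrightarrow> (\<lambda>y. hproj N y (X y)) differentiable (at z)"
  using connection smooth_on_differentiable hproj_field_differentiable
  unfolding nonlinear_connection_def by blast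

lemma dyn_nabla_vertical_field:
  assumes z: "z \<in> W" and Y: "Y differentiable (at z)"
    and vert: "\<And>y. y \<in> W \<Longrightarrow> fst (Y y) = 0"
  shows "dyn_nabla \<rho> N Y z = vproj N z (lie \<rho> Y z)"
proof -
  have "frechet_derivative (\<lambda>y. hproj N y (Y y)) (at z) = frechet_derivative (\<lambda>_. 0) (at z)"
    by (rule frechet_derivative_transform_within_open[symmetric, OF _ open_W z])
       (simp_all add: hproj_vertical vert)
  then have "lie \<rho> (\<lambda>y. hproj N y (Y y)) z = 0"
    by (simp add: lie_def hproj_vertical vert[OF z] linear_0[OF linear_deriv_rho[OF z]])
  moreover have "frechet_derivative (\<lambda>y. vproj N y (Y y)) (at z) = frechet_derivative Y (at z)"
    by (rule frechet_derivative_transform_within_open[symmetric, OF Y open_W z])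
       (simp add: vproj_vertical vert)
  then have "lie \<rho> (\<lambda>y. vproj N y (Y y)) z = lie \<rho> Y z"
    by (simp add: lie_def vproj_vertical vert[OF z])
  ultimately show ?thesis
    by (simp add: dyn_nabla_def linear_0[OF linear_hproj])
qed

lemma J_dyn_nabla:
  "z \<in> W \<Longrightarrow> J z (dyn_nabla \<rho> N X z) = J z (lie \<rho> (\<lambda>y. hproj N y (X y)) z)"
  using J_cong[of z "hproj N z _"] J_eq_0_iff[of z "vproj N z _"]
  by (simp add: dyn_nabla_def linear_add[OF linear_J])

lemma J_lie_hproj_field:
  assumes z: "z \<in> W" and X: "X differentiable (at z)"
  shows "J z (lie \<rho> (\<lambda>y. hproj N y (X y)) z) = J z (lie \<rho> X z) + vproj N z (X z)"
proof -
  have hX: "(\<lambda>y. hproj N y (X y)) differentiable (at z)"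
    by (rule hproj_field_differentiable_at[OF z X])
  have vX: "(\<lambda>y. vproj N y (X y)) differentiable (at z)"
    using differentiable_diff[OF X hX] by (simp add: vproj_def)
  have "lie \<rho> X z = lie \<rho> (\<lambda>y. hproj N y (X y)) z + lie \<rho> (\<lambda>y. vproj N y (X y)) z"
    using lie_add[OF hX vX linear_deriv_rho[OF z]] by (simp add: vproj_def)
  moreover have "J z (lie \<rho> (\<lambda>y. vproj N y (X y)) z) = - vproj N z (X z)"
    by (rule J_lie_vertical_field[OF z vX]) simp
  ultimately show ?thesis
    by (simp add: linear_add[OF linear_J[OF z]])
qed

lemma dyn_nabla_T_eq:
  assumes z: "z \<in> W" and X: "X differentiable (at z)"
  shows "dyn_nabla_T \<rho> N J X z = lie_deriv_at \<rho> J z (X z) + hproj N z (X z) - vproj N z (X z)"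
proof -
  let ?w = "X z" and ?JX = "\<lambda>y. J y (X y)"
  have JX: "?JX differentiable (at z)"
    using has_derivative_J_apply[OF z X[unfolded frechet_derivative_works]] differentiableI by blast
  have "lie \<rho> ?JX z = lie_deriv_at \<rho> J z ?w + J z (lie \<rho> X z)"
    using lie_deriv_T_eq[OF z X, of \<rho>] unfolding lie_deriv_T_def by (simp add: diff_eq_eq)
  then have "dyn_nabla \<rho> N ?JX z = vproj N z (lie_deriv_at \<rho> J z ?w + J z (lie \<rho> X z))"
    using dyn_nabla_vertical_field[OF z JX] by simp
  also have "\<dots> = lie_deriv_at \<rho> J z ?w + hproj N z ?w + J z (lie \<rho> X z)"
  proof -
    have "hproj N z (lie_deriv_at \<rho> J z ?w + J z (lie \<rho> X z)) = - hproj N z ?w"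
      by (simp add: linear_add[OF linear_hproj] hproj_lie_deriv_at[OF z] hproj_vertical z)
    then show ?thesis
      by (simp add: vproj_def)
  qed
  finally show ?thesis
    using J_dyn_nabla[OF z] J_lie_hproj_field[OF z X] by (simp add: dyn_nabla_T_def)
qed

lemma snd_lie_deriv_plus_h_minus_v_axis:
  assumes "z \<in> W"
  shows "snd (lie_deriv_at \<rho> J z (axis i 1, 0) + hproj N z (axis i 1, 0)
              - vproj N z (axis i 1, 0)) $ j =
     frechet_derivative (\<lambda>y. tcoef J y i j) (at z) (\<rho> z)
     - (\<Sum>k\<in>UNIV. tcoef J z i k * frechet_derivative (\<lambda>y. snd (\<rho> y) $ j) (at z) (0, axis k 1))
     + (\<Sum>k\<in>UNIV. tcoef J z k j * frechet_derivative (\<lambda>y. fst (\<rho> y) $ k) (at z) (axis i 1, 0))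
     + 2 * N z i j"
  by (simp add: snd_lie_deriv_at_axis[OF assms] vproj_def snd_hproj_axis)

lemma lie_deriv_plus_h_minus_v_eq_0_iff:
  assumes z: "z \<in> W"
  shows "(\<forall>w. lie_deriv_at \<rho> J z w + hproj N z w - vproj N z w = 0) \<longleftrightarrow>
    (\<forall>i j. N z i j = 1/2 *
       ((\<Sum>k\<in>UNIV. tcoef J z i k * frechet_derivative (\<lambda>y. snd (\<rho> y) $ j) (at z) (0, axis k 1))
        - (\<Sum>k\<in>UNIV. tcoef J z k j * frechet_derivative (\<lambda>y. fst (\<rho> y) $ k) (at z) (axis i 1, 0))
        - frechet_derivative (\<lambda>y. tcoef J y i j) (at z) (\<rho> z)))"
proof -
  have axes: "(\<forall>w. lie_deriv_at \<rho> J z w + hproj N z w - vproj N z w = 0) \<longleftrightarrow>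
      (\<forall>i j. snd (lie_deriv_at \<rho> J z (axis i 1, 0) + hproj N z (axis i 1, 0)
                  - vproj N z (axis i 1, 0)) $ j = 0)"
    by (rule linear_eq_0_iff_horizontal_axes)
       (simp_all add: linear_compose_add linear_compose_sub linear_lie_deriv_at[OF z] linear_hproj
         linear_vproj fst_lie_deriv_at[OF z] lie_deriv_at_vertical[OF z] hproj_vertical vproj_vertical)
  show ?thesis
    unfolding axes snd_lie_deriv_plus_h_minus_v_axis[OF z] by (intro all_cong1) (auto simp: algebra_simps)
qed

end

theorem mainTheorem3:
  fixes W :: "('n::finite) cot set"
    and J :: "'n cot \<Rightarrow> 'n cot \<Rightarrow> 'n cot"
    and \<rho> :: "'n cot \<Rightarrow> 'n cot"
    and N :: "'n cot \<Rightarrow> 'n \<Rightarrow> 'n \<Rightarrow> real"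
  assumes "open W"
    and "adapted_ats W J"
    and "J_regular W J \<rho>"
    and "nonlinear_connection W N"
  shows "((\<forall>X. smooth_on W X \<longrightarrow> (\<forall>z\<in>W. dyn_nabla_T \<rho> N J X z = 0))
          \<longleftrightarrow> (\<forall>X. smooth_on W X \<longrightarrow>
                 (\<forall>z\<in>W. lie_deriv_T \<rho> J X z + hproj N z (X z) - vproj N z (X z) = 0)))
       \<and> ((\<forall>X. smooth_on W X \<longrightarrow>
                 (\<forall>z\<in>W. lie_deriv_T \<rho> J X z + hproj N z (X z) - vproj N z (X z) = 0))
          \<longleftrightarrow> (\<forall>z\<in>W. \<forall>i j. N z i j = 1/2 *
                 ((\<Sum>k\<in>UNIV. tcoef J z i k *
                      frechet_derivative (\<lambda>y. snd (\<rho> y) $ j) (at z) (0, axis k 1))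
                  - (\<Sum>k\<in>UNIV. tcoef J z k j *
                      frechet_derivative (\<lambda>y. fst (\<rho> y) $ k) (at z) (axis i 1, 0))
                  - frechet_derivative (\<lambda>y. tcoef J y i j) (at z) (\<rho> z))))"
proof -
  interpret dynamical_setting W J \<rho> N
    using assms by unfold_locales
  let ?S = "\<lambda>z w. lie_deriv_at \<rho> J z w + hproj N z w - vproj N z w"
  have nabla: "dyn_nabla_T \<rho> N J X z = ?S z (X z)" if "smooth_on W X" "z \<in> W" for X z
    using dyn_nabla_T_eq smooth_on_differentiable that by blast
  have lie: "lie_deriv_T \<rho> J X z + hproj N z (X z) - vproj N z (X z) = ?S z (X z)"
    if "smooth_on W X" "z \<in> W" for X z
    by (simp add: lie_deriv_T_eq[OF that(2) smooth_on_differentiable[OF that]])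
  have "(\<forall>X. smooth_on W X \<longrightarrow> (\<forall>z\<in>W. ?S z (X z) = 0)) \<longleftrightarrow> (\<forall>z\<in>W. \<forall>w. ?S z w = 0)"
    by (rule vanishes_on_smooth_fields_iff)
  then show ?thesis
    using lie_deriv_plus_h_minus_v_eq_0_iff by (simp add: nabla lie cong: all_cong)
qed

end
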